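(* Let $n\ge5$, $x_1,\dots,x_{n-1}>0$, $\gamma,\delta>0$ with $\gamma\ne1\ne\delta$, $x_0=1$, and let $\mathbf{R}$ be the $n\times n$ matrix with entries $r_{ij}=x_{j-1}/x_{i-1}$ except $r_{12}=\delta x_1$, $r_{21}=1/(\delta x_1)$, $r_{34}=\gamma x_3/x_2$, $r_{43}=x_2/(\gamma x_3)$. Let $\mathbf{w}^{EM}$ be its principal right eigenvector. Then for $i=5,\dots,n$: $\delta>1$ iff $w_2^{EM}/w_i^{EM}<x_{i-1}/x_1$, and $\delta<1$ iff $w_2^{EM}/w_i^{EM}>x_{i-1}/x_1$.
   Context: The principal right eigenvector is the positive (Perron) eigenvector belonging to the largest eigenvalue. *)

theory Defs
  imports Complex_Main
begin

text \<open>Matrices are represented as functions nat => nat => real with indices 1..n,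
  vectors as functions nat => real with indices 1..n.\<close>

definition pcm_R :: "(nat \<Rightarrow> real) \<Rightarrow> real \<Rightarrow> real \<Rightarrow> nat \<Rightarrow> nat \<Rightarrow> real" where
  "pcm_R x \<gamma> \<delta> i j =
     (if i = 1 \<and> j = 2 then \<delta> * x 1
      else if i = 2 \<and> j = 1 then 1 / (\<delta> * x 1)
      else if i = 3 \<and> j = 4 then \<gamma> * x 3 / x 2
      else if i = 4 \<and> j = 3 then x 2 / (\<gamma> * x 3)
      else x (j - 1) / x (i - 1))"

definition principal_right_eigenvector ::
  "nat \<Rightarrow> (nat \<Rightarrow> nat \<Rightarrow> real) \<Rightarrow> (nat \<Rightarrow> real) \<Rightarrow> bool" where
  "principal_right_eigenvector n A w \<longleftrightarrow>
     (\<forall>i\<in>{1..n}. w i > 0) \<and>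
     (\<exists>r::real.
        (\<forall>i\<in>{1..n}. (\<Sum>j=1..n. A i j * w j) = r * w i) \<and>
        (\<forall>(\<mu>::complex) (v::nat \<Rightarrow> complex).
            (\<exists>i\<in>{1..n}. v i \<noteq> 0) \<and>
            (\<forall>i\<in>{1..n}. (\<Sum>j=1..n. complex_of_real (A i j) * v j) = \<mu> * v i)
            \<longrightarrow> cmod \<mu> \<le> r))"

end

theory Submission
  imports Defs
begin

text \<open>Rows \<open>i \<ge> 5\<close> of \<open>R\<close> are consistent, \<open>r\<^sub>i\<^sub>j = x\<^sub>j\<^sub>-\<^sub>1 / x\<^sub>i\<^sub>-\<^sub>1\<close>, while row 2 deviates from
  consistency only in column 1, by the factor \<open>1/\<delta>\<close>. Multiplying the eigen-equation of row \<open>k\<close>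
  by \<open>x\<^sub>k\<^sub>-\<^sub>1\<close> therefore turns each row into the same weighted sum \<open>S = \<Sigma>\<^sub>j w\<^sub>j x\<^sub>j\<^sub>-\<^sub>1\<close>, plus
  the correction \<open>(1/\<delta> - 1) w\<^sub>1\<close> in row 2. Subtracting the equations of rows 2 and \<open>i\<close> gives
  \<open>r (w\<^sub>2 x\<^sub>1 - w\<^sub>i x\<^sub>i\<^sub>-\<^sub>1) = (1/\<delta> - 1) w\<^sub>1\<close> for the eigenvalue \<open>r > 0\<close>, whose sign is that of
  \<open>1 - \<delta>\<close>.\<close>

lemma row_sum_perturbed_consistent:
  fixes A :: "nat \<Rightarrow> nat \<Rightarrow> real" and x w :: "nat \<Rightarrow> real"
  assumes l: "l \<in> {1..n}" and xk: "x (k - 1) \<noteq> 0"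
    and row: "\<And>j. j \<in> {1..n} \<Longrightarrow> A k j = (if j = l then c else 1) * x (j - 1) / x (k - 1)"
  shows "(\<Sum>j=1..n. A k j * w j) * x (k - 1)
           = (\<Sum>j=1..n. w j * x (j - 1)) + (c - 1) * w l * x (l - 1)"
proof -
  have "(\<Sum>j=1..n. A k j * w j) * x (k - 1)
          = (\<Sum>j=1..n. w j * x (j - 1) + (if j = l then (c - 1) * w l * x (l - 1) else 0))"
    unfolding sum_distrib_right
    by (rule sum.cong) (use xk in \<open>auto simp: row algebra_simps\<close>)
  also have "\<dots> = (\<Sum>j=1..n. w j * x (j - 1)) + (c - 1) * w l * x (l - 1)"
    using l by (simp add: sum.distrib)
  finally show ?thesis .
qed

lemma pcm_R_consistent_row:
  assumes "i \<ge> 5"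
  shows "pcm_R x \<gamma> \<delta> i j = x (j - 1) / x (i - 1)"
  using assms by (simp add: pcm_R_def)

lemma pcm_R_second_row:
  assumes "x 0 = 1"
  shows "pcm_R x \<gamma> \<delta> 2 j = (if j = 1 then 1 / \<delta> else 1) * x (j - 1) / x 1"
  using assms by (simp add: pcm_R_def)

lemma sign_of_balance:
  fixes r a b c \<delta> :: real
  assumes "r > 0" "c > 0" "\<delta> > 0" and balance: "r * (a - b) = (1 / \<delta> - 1) * c"
  shows "(\<delta> > 1 \<longleftrightarrow> a < b) \<and> (\<delta> < 1 \<longleftrightarrow> a > b)"
proof -
  have "\<delta> > 1 \<longleftrightarrow> 1 / \<delta> - 1 < 0" and "\<delta> < 1 \<longleftrightarrow> 1 / \<delta> - 1 > 0"
    using \<open>\<delta> > 0\<close> by (auto simp: field_simps)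
  moreover have "1 / \<delta> - 1 < 0 \<longleftrightarrow> a < b" and "1 / \<delta> - 1 > 0 \<longleftrightarrow> a > b"
    using assms by (metis mult_less_0_iff zero_less_mult_iff diff_less_0_iff_less
        diff_gt_0_iff_gt less_asym)+
  ultimately show ?thesis by blast
qed

lemma ratio_less_iff_cross:
  fixes a b c d :: real
  assumes "b > 0" "d > 0"
  shows "a / b < c / d \<longleftrightarrow> a * d < c * b" and "a / b > c / d \<longleftrightarrow> a * d > c * b"
  using assms by (simp_all add: divide_less_eq less_divide_eq mult.commute mult.left_commute)

lemma pcm_R_eigen_balance:
  fixes x w :: "nat \<Rightarrow> real"
  assumes i: "i \<in> {5..n}" and x0: "x 0 = 1" and xpos: "\<And>j. j \<in> {1..n} \<Longrightarrow> x (j - 1) > 0"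
    and wpos: "\<forall>j\<in>{1..n}. w j > 0"
    and eig: "\<forall>k\<in>{1..n}. (\<Sum>j=1..n. pcm_R x \<gamma> \<delta> k j * w j) = r * w k"
  shows "r > 0" and "r * (w 2 * x 1 - w i * x (i - 1)) = (1 / \<delta> - 1) * w 1"
proof -
  define S where "S = (\<Sum>j=1..n. w j * x (j - 1))"
  have "S > 0"
    unfolding S_def using wpos xpos i by (intro sum_pos) auto
  have row_i: "r * (w i * x (i - 1)) = S"
  proof -
    have "(\<Sum>j=1..n. pcm_R x \<gamma> \<delta> i j * w j) * x (i - 1) = S"
      using row_sum_perturbed_consistent[of 1 n x i "pcm_R x \<gamma> \<delta>" 1 w] xpos[of i] i
      by (simp add: S_def pcm_R_consistent_row)
    then show ?thesis using eig i by (simp add: mult.assoc)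
  qed
  have row_2: "r * (w 2 * x 1) = S + (1 / \<delta> - 1) * w 1"
  proof -
    have "(\<Sum>j=1..n. pcm_R x \<gamma> \<delta> 2 j * w j) * x 1 = S + (1 / \<delta> - 1) * w 1"
      using row_sum_perturbed_consistent[of 1 n x 2 "pcm_R x \<gamma> \<delta>" "1 / \<delta>" w]
        xpos[of 2] i x0 by (simp add: S_def pcm_R_second_row)
    then show ?thesis using eig i by (simp add: mult.assoc)
  qed
  have "w i * x (i - 1) > 0"
    using wpos xpos[of i] i by simp
  with row_i \<open>S > 0\<close> show "r > 0"
    by (metis zero_less_mult_pos2)
  show "r * (w 2 * x 1 - w i * x (i - 1)) = (1 / \<delta> - 1) * w 1"
    using row_i row_2 by (simp add: right_diff_distrib)
qed

theorem mainTheorem18: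
  fixes n :: nat and x :: "nat \<Rightarrow> real" and \<gamma> \<delta> :: real and w :: "nat \<Rightarrow> real"
  assumes "n \<ge> 5"
    and "\<forall>k\<in>{1..n-1}. x k > 0"
    and "x 0 = 1"
    and "\<gamma> > 0" and "\<delta> > 0" and "\<gamma> \<noteq> 1" and "\<delta> \<noteq> 1"
    and "principal_right_eigenvector n (pcm_R x \<gamma> \<delta>) w"
  shows "\<forall>i\<in>{5..n}. (\<delta> > 1 \<longleftrightarrow> w 2 / w i < x (i - 1) / x 1) \<and>
                     (\<delta> < 1 \<longleftrightarrow> w 2 / w i > x (i - 1) / x 1)"
proof
  fix i assume i: "i \<in> {5..n}"
  have xpos: "x (j - 1) > 0" if "j \<in> {1..n}" for j
  proof (cases "j = 1")
    case False
    then have "j - 1 \<in> {1..n-1}" using that by auto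
    then show ?thesis using assms(2) by blast
  qed (use assms(3) in simp)
  obtain r where wpos: "\<forall>j\<in>{1..n}. w j > 0"
    and eig: "\<forall>k\<in>{1..n}. (\<Sum>j=1..n. pcm_R x \<gamma> \<delta> k j * w j) = r * w k"
    using assms(8) unfolding principal_right_eigenvector_def by blast
  note balance = pcm_R_eigen_balance[OF i assms(3) xpos wpos eig]
  have "(\<delta> > 1 \<longleftrightarrow> w 2 * x 1 < w i * x (i - 1)) \<and> (\<delta> < 1 \<longleftrightarrow> w 2 * x 1 > w i * x (i - 1))"
    using sign_of_balance[OF balance(1) _ \<open>\<delta> > 0\<close> balance(2)] wpos i by simp
  then show "(\<delta> > 1 \<longleftrightarrow> w 2 / w i < x (i - 1) / x 1) \<and> (\<delta> < 1 \<longleftrightarrow> w 2 / w i > x (i - 1) / x 1)"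
    using ratio_less_iff_cross[where a = "w 2" and b = "w i" and c = "x (i - 1)" and d = "x 1"]
      wpos xpos[of 2] i by (simp add: mult.commute)
qed

end
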